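(* In a hierarchical tensor factorization with mode tree $\mathcal T$, for any $\nu\in\mathrm{int}(\mathcal T)$ and $r\in[R_{Pa(\nu)}]$: $$\|\mathcal W^{(\nu,r)}\|\le\|W^{(\nu)}_{:,r}\|\cdot\prod_{\nu_c\in C(\nu)}\|\mathcal W^{(\nu_c,:)}\|.$$
   Context: Fix $N\in\mathbb N$, $D_1,\dots,D_N\in\mathbb N$; $[K]:=\{1,\dots,K\}$; norms are Frobenius norms; $\otimes$ the tensor product. A mode tree $\mathcal T$ over $[N]$ is a rooted tree whose nodes are labeled by subsets of $[N]$, with exactly $N$ leaves labeled $\{1\},\dots,\{N\}$, and where each interior node's label is the union of its children's labels; nodes are identified with labels, root $[N]$, $\mathrm{int}(\mathcal T)$ interior nodes, $Pa(\nu)$ parent, $C(\nu)$ children (fixed order). A hierarchical tensor factorization has $R_\nu\in\mathbb N$ ($\nu\in\mathrm{int}(\mathcal T)$), $R_{Pa([N])}:=1$, $R_{\{n\}}:=D_n$, weight matrices $W^{(\nu)}\in\mathbb R^{R_\nu\times R_{Pa(\nu)}}$. Intermediate tensors: $\mathcal W^{(\{n\},r)}:=W^{(\{n\})}_{:,r}$; for $\nu\in\mathrm{int}(\mathcal T)\setminus\{[N]\}$ (leaves to root), $r\in[R_{Pa(\nu)}]$: $\mathcal W^{(\nu,r)}:=\pi_\nu\big(\sum_{r'=1}^{R_\nu}W^{(\nu)}_{r',r}\bigotimes_{\nu_c\in C(\nu)}\mathcal W^{(\nu_c,r')}\big)$; end tensor $\mathcal W_H:=\pi_{[N]}\big(\sum_{r'=1}^{R_{[N]}}W^{([N])}_{r',1}\bigotimes_{\nu_c\in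 C([N])}\mathcal W^{(\nu_c,r')}\big)$, where $\pi_\nu$ permutes modes (ordered by children, each child's elements ascending) into ascending order of the elements of $\nu$; by convention $\mathcal W^{([N],1)}:=\mathcal W_H$. For $\nu\in\mathcal T$, $\mathcal W^{(\nu,:)}$ is the tensor obtained by stacking $(\mathcal W^{(\nu,r)})_{r=1}^{R_{Pa(\nu)}}$ along an additional last mode, i.e. $\mathcal W^{(\nu,:)}_{:,\dots,:,r}=\mathcal W^{(\nu,r)}$. *)

theory Defs
  imports Complex_Main "HOL-Library.FuncSet"
begin

datatype mtree = MLeaf nat | MNode "mtree list"

fun label :: "mtree \<Rightarrow> nat set" where
  "label (MLeaf n) = {n}"
| "label (MNode ts) = (\<Union>t\<in>set ts. label t)"

fun leaves :: "mtree \<Rightarrow> nat list" where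
  "leaves (MLeaf n) = [n]"
| "leaves (MNode ts) = concat (map leaves ts)"

fun subtrees :: "mtree \<Rightarrow> mtree list" where
  "subtrees (MLeaf n) = [MLeaf n]"
| "subtrees (MNode ts) = MNode ts # concat (map subtrees ts)"

fun children_nonempty :: "mtree \<Rightarrow> bool" where
  "children_nonempty (MLeaf n) = True"
| "children_nonempty (MNode ts) = (ts \<noteq> [] \<and> (\<forall>t\<in>set ts. children_nonempty t))"

text \<open>A mode tree over [N]: exactly N leaves, labelled {1},...,{N}; interior nodes are
  non-leaves (nonempty children lists); nodes are identified with their labels (distinct labels).\<close>
definition mode_tree :: "nat \<Rightarrow> mtree \<Rightarrow> bool" where
  "mode_tree N T \<longleftrightarrow> distinct (leaves T) \<and> set (leaves T) = {1..N}
     \<and> children_nonempty T \<and> distinct (map label (subtrees T))"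

text \<open>Pairs (node, R_{Pa(node)}) of all nodes of the tree; the root gets R_{Pa([N])} = 1.\<close>
fun nodes_pr :: "(nat set \<Rightarrow> nat) \<Rightarrow> mtree \<Rightarrow> nat \<Rightarrow> (mtree \<times> nat) set" where
  "nodes_pr R (MLeaf n) pr = {(MLeaf n, pr)}"
| "nodes_pr R (MNode ts) pr = insert (MNode ts, pr) (\<Union>c\<in>set ts. nodes_pr R c (R (label (MNode ts))))"

text \<open>A tensor over the modes of a label set is represented
  as a function of a multi-index i, where i n is the index in mode n (1-based); this makes
  the mode permutation pi_nu implicit (modes are addressed by their number).
  W nu r' r is the entry (r', r) of the weight matrix W^{(nu)}; R gives R_nu for interior nodes,
  and R_{{n}} = D n.\<close>
fun tens :: "(nat \<Rightarrow> nat) \<Rightarrow> (nat set \<Rightarrow> nat) \<Rightarrow> (nat set \<Rightarrow> nat \<Rightarrow> nat \<Rightarrow> real)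
              \<Rightarrow> mtree \<Rightarrow> nat \<Rightarrow> (nat \<Rightarrow> nat) \<Rightarrow> real" where
  "tens D R W (MLeaf n) r i = W {n} (i n) r"
| "tens D R W (MNode ts) r i =
     (\<Sum>r'=1..R (label (MNode ts)). W (label (MNode ts)) r' r * prod_list (map (\<lambda>c. tens D R W c r' i) ts))"

definition idx :: "(nat \<Rightarrow> nat) \<Rightarrow> nat set \<Rightarrow> (nat \<Rightarrow> nat) set" where
  "idx D L = PiE L (\<lambda>n. {1..D n})"

definition fnorm :: "'a set \<Rightarrow> ('a \<Rightarrow> real) \<Rightarrow> real" where
  "fnorm S f = sqrt (\<Sum>x\<in>S. (f x)\<^sup>2)"

text \<open>Norm of the stacked tensor W^{(c,:)}, stacked along an extra last mode of size Rpa = R_{Pa(c)}.\<close>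
definition stack_norm :: "(nat \<Rightarrow> nat) \<Rightarrow> (nat set \<Rightarrow> nat) \<Rightarrow> (nat set \<Rightarrow> nat \<Rightarrow> nat \<Rightarrow> real)
              \<Rightarrow> mtree \<Rightarrow> nat \<Rightarrow> real" where
  "stack_norm D R W c Rpa = fnorm (idx D (label c) \<times> {1..Rpa}) (\<lambda>(i, r). tens D R W c r i)"

end

theory Submission
  imports Defs "HOL-Analysis.Convex"
begin

text \<open>Write \<open>P r' = \<Otimes>\<^sub>c W(c, r')\<close> over the children \<open>c\<close> of \<open>\<nu>\<close>, so that
  \<open>W(\<nu>, r) = \<Sum>\<^sub>r' W\<^sub>r',\<^sub>r P r'\<close>.  Cauchy-Schwarz in \<open>r'\<close> bounds \<open>\<parallel>W(\<nu>, r)\<parallel>\<close> by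
  \<open>\<parallel>W\<^sub>:,\<^sub>r\<parallel>\<close> times the norm of the stack \<open>(P r')\<^sub>r'\<close>.  The children act on disjoint modes, so
  \<open>\<parallel>P r'\<parallel>\<^sup>2 = \<Prod>\<^sub>c a\<^sub>c r'\<close> with \<open>a\<^sub>c r' = \<parallel>W(c, r')\<parallel>\<^sup>2\<close>, and for nonnegative terms
  \<open>\<Sum>\<^sub>r' \<Prod>\<^sub>c a\<^sub>c r' \<le> \<Prod>\<^sub>c \<Sum>\<^sub>r' a\<^sub>c r' = \<Prod>\<^sub>c \<parallel>W(c, :)\<parallel>\<^sup>2\<close>.\<close>

lemma sum_PiE_Un_mult:
  fixes f g :: "('a \<Rightarrow> 'b) \<Rightarrow> 'c::comm_semiring_0"
  assumes disj: "A \<inter> B = {}"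
    and f_local: "\<And>i j. (\<And>n. n \<in> A \<Longrightarrow> i n = j n) \<Longrightarrow> f i = f j"
    and g_local: "\<And>i j. (\<And>n. n \<in> B \<Longrightarrow> i n = j n) \<Longrightarrow> g i = g j"
  shows "(\<Sum>i\<in>PiE (A \<union> B) S. f i * g i) = (\<Sum>i\<in>PiE A S. f i) * (\<Sum>j\<in>PiE B S. g j)"
proof -
  have "(\<Sum>i\<in>PiE A S. f i) * (\<Sum>j\<in>PiE B S. g j) = (\<Sum>(a, b)\<in>PiE A S \<times> PiE B S. f a * g b)"
    by (simp add: sum_product sum.cartesian_product)
  also have "\<dots> = (\<Sum>i\<in>PiE (A \<union> B) S. f i * g i)"
  proof -
    define merge where "merge = (\<lambda>(a :: 'a \<Rightarrow> 'b, b) n. if n \<in> A then a n else b n)"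
    have "f (merge ab) = f (fst ab)" "g (merge ab) = g (snd ab)" for ab
      using disj by (auto simp: merge_def split: prod.splits intro!: f_local g_local)
    then show ?thesis
      using disj
      by (intro sum.reindex_bij_witness[of _ "\<lambda>i. (restrict i A, restrict i B)" merge])
        (auto simp: merge_def PiE_def extensional_def fun_eq_iff split: prod.splits)
  qed
  finally show ?thesis ..
qed

lemma tens_cong:
  assumes "\<And>n. n \<in> label t \<Longrightarrow> i n = j n"
  shows "tens D R W t r i = tens D R W t r j"
  using assms
proof (induction t arbitrary: r)
  case (MLeaf n)
  then show ?case by simp
next
  case (MNode ts)
  then have "map (\<lambda>c. tens D R W c r' i) ts = map (\<lambda>c. tens D R W c r' j) ts" for r'
    by auto
  then show ?case by (simp only: tens.simps)
qed

lemma label_eq_set_leaves: "label t = set (leaves t)"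
  by (induction t) auto

lemma subtree_of_nodes_pr: "(t, p) \<in> nodes_pr R T q \<Longrightarrow> t \<in> set (subtrees T)"
  by (induction T arbitrary: q) auto

lemma distinct_leaves_subtree:
  "t \<in> set (subtrees T) \<Longrightarrow> distinct (leaves T) \<Longrightarrow> distinct (leaves t)"
  by (induction T) (auto simp: distinct_concat_iff)

lemma children_nonempty_subtree:
  "t \<in> set (subtrees T) \<Longrightarrow> children_nonempty T \<Longrightarrow> children_nonempty t"
  by (induction T) auto

lemma sum_sq_prod_list_tens:
  assumes "distinct (concat (map leaves cs))"
  shows "(\<Sum>i\<in>idx D (\<Union>c\<in>set cs. label c). (\<Prod>c\<leftarrow>cs. tens D R W c r i)\<^sup>2)
       = (\<Prod>c\<leftarrow>cs. \<Sum>i\<in>idx D (label c). (tens D R W c r i)\<^sup>2)"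
  using assms
proof (induction cs)
  case Nil
  then show ?case by (simp add: idx_def)
next
  case (Cons c cs)
  have disj: "label c \<inter> (\<Union>c\<in>set cs. label c) = {}"
    using Cons.prems by (auto simp: label_eq_set_leaves)
  have "(\<Sum>i\<in>idx D (\<Union>c\<in>set (c # cs). label c). (\<Prod>c\<leftarrow>c # cs. tens D R W c r i)\<^sup>2)
      = (\<Sum>i\<in>PiE (label c \<union> (\<Union>c\<in>set cs. label c)) (\<lambda>n. {1..D n}).
           (tens D R W c r i)\<^sup>2 * (\<Prod>c\<leftarrow>cs. tens D R W c r i)\<^sup>2)"
    by (simp add: idx_def power_mult_distrib)
  also have "\<dots> = (\<Sum>i\<in>idx D (label c). (tens D R W c r i)\<^sup>2) *
       (\<Sum>i\<in>idx D (\<Union>c\<in>set cs. label c). (\<Prod>c\<leftarrow>cs. tens D R W c r i)\<^sup>2)"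
    unfolding idx_def
  proof (rule sum_PiE_Un_mult[OF disj])
    fix i j :: "nat \<Rightarrow> nat"
    assume "\<And>n. n \<in> label c \<Longrightarrow> i n = j n"
    then show "(tens D R W c r i)\<^sup>2 = (tens D R W c r j)\<^sup>2"
      by (metis tens_cong)
  next
    fix i j :: "nat \<Rightarrow> nat"
    assume "\<And>n. n \<in> (\<Union>c\<in>set cs. label c) \<Longrightarrow> i n = j n"
    then have "map (\<lambda>c. tens D R W c r i) cs = map (\<lambda>c. tens D R W c r j) cs"
      by (auto intro: tens_cong)
    then show "(\<Prod>c\<leftarrow>cs. tens D R W c r i)\<^sup>2 = (\<Prod>c\<leftarrow>cs. tens D R W c r j)\<^sup>2"
      by (simp only:)
  qed
  also have "\<dots> = (\<Prod>c\<leftarrow>c # cs. \<Sum>i\<in>idx D (label c). (tens D R W c r i)\<^sup>2)"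
    using Cons by simp
  finally show ?case .
qed

lemma sum_prod_list_le_prod_list_sum:
  fixes a :: "'c \<Rightarrow> 'd \<Rightarrow> 'e::linordered_semidom"
  assumes "cs \<noteq> []" and "finite A" and nonneg: "\<And>c r. 0 \<le> a c r"
  shows "(\<Sum>r\<in>A. \<Prod>c\<leftarrow>cs. a c r) \<le> (\<Prod>c\<leftarrow>cs. \<Sum>r\<in>A. a c r)"
  using assms(1)
proof (induction cs rule: list_nonempty_induct)
  case (single c)
  then show ?case by simp
next
  case (cons c cs)
  let ?P = "\<lambda>r. \<Prod>c\<leftarrow>cs. a c r"
  have P_nonneg: "0 \<le> ?P r" for r
    by (rule prod_list_nonneg) (auto intro: nonneg)
  have "(\<Sum>r\<in>A. a c r * ?P r) \<le> (\<Sum>r\<in>A. a c r * (\<Sum>r\<in>A. ?P r))"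
    using \<open>finite A\<close> P_nonneg nonneg
    by (intro sum_mono mult_left_mono member_le_sum) auto
  also have "\<dots> = (\<Sum>r\<in>A. a c r) * (\<Sum>r\<in>A. ?P r)"
    by (simp add: sum_distrib_right)
  also have "\<dots> \<le> (\<Sum>r\<in>A. a c r) * (\<Prod>c\<leftarrow>cs. \<Sum>r\<in>A. a c r)"
    using cons.IH nonneg by (intro mult_left_mono sum_nonneg) auto
  finally show ?case by simp
qed

lemma sqrt_prod_list:
  "(\<And>x. x \<in> set xs \<Longrightarrow> 0 \<le> f x) \<Longrightarrow> sqrt (\<Prod>x\<leftarrow>xs. f x) = (\<Prod>x\<leftarrow>xs. sqrt (f x))"
  by (induction xs) (auto simp: real_sqrt_mult)

lemma fnorm_nonneg: "0 \<le> fnorm S f"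
  by (simp add: fnorm_def sum_nonneg)

lemma fnorm_sum_mult_le:
  "fnorm I (\<lambda>i. \<Sum>r\<in>A. w r * f r i) \<le> fnorm A w * fnorm (I \<times> A) (\<lambda>(i, r). f r i)"
proof -
  have "(\<Sum>i\<in>I. (\<Sum>r\<in>A. w r * f r i)\<^sup>2) \<le> (\<Sum>i\<in>I. (\<Sum>r\<in>A. (w r)\<^sup>2) * (\<Sum>r\<in>A. (f r i)\<^sup>2))"
    by (intro sum_mono Cauchy_Schwarz_ineq_sum)
  also have "\<dots> = (\<Sum>r\<in>A. (w r)\<^sup>2) * (\<Sum>x\<in>I \<times> A. ((\<lambda>(i, r). f r i) x)\<^sup>2)"
    by (simp add: sum_distrib_left sum.cartesian_product')
  finally show ?thesis
    unfolding fnorm_def real_sqrt_mult[symmetric] by (rule real_sqrt_le_mono)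
qed

lemma stack_norm_eq_sqrt_sum:
  "stack_norm D R W c m = sqrt (\<Sum>r\<in>{1..m}. \<Sum>i\<in>idx D (label c). (tens D R W c r i)\<^sup>2)"
  unfolding stack_norm_def fnorm_def
  by (simp add: sum.cartesian_product' sum.swap[of _ "idx D (label c)"])

lemma fnorm_stacked_prod_list_tens_le:
  assumes "distinct (concat (map leaves cs))" and "cs \<noteq> []"
  shows "fnorm (idx D (\<Union>c\<in>set cs. label c) \<times> {1..m}) (\<lambda>(i, r). \<Prod>c\<leftarrow>cs. tens D R W c r i)
         \<le> (\<Prod>c\<leftarrow>cs. stack_norm D R W c m)"
proof -
  let ?a = "\<lambda>c r. \<Sum>i\<in>idx D (label c). (tens D R W c r i)\<^sup>2"
  have "(\<Sum>x\<in>idx D (\<Union>c\<in>set cs. label c) \<times> {1..m}. ((\<lambda>(i, r). \<Prod>c\<leftarrow>cs. tens D R W c r i) x)\<^sup>2)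
      = (\<Sum>r\<in>{1..m}. \<Sum>i\<in>idx D (\<Union>c\<in>set cs. label c). (\<Prod>c\<leftarrow>cs. tens D R W c r i)\<^sup>2)"
    unfolding sum.cartesian_product' by (simp add: sum.swap[of _ "idx D _"])
  also have "\<dots> = (\<Sum>r\<in>{1..m}. \<Prod>c\<leftarrow>cs. ?a c r)"
    by (simp only: sum_sq_prod_list_tens[OF assms(1)])
  also have "\<dots> \<le> (\<Prod>c\<leftarrow>cs. \<Sum>r\<in>{1..m}. ?a c r)"
    by (rule sum_prod_list_le_prod_list_sum[OF assms(2)]) (auto intro: sum_nonneg)
  finally have "fnorm (idx D (\<Union>c\<in>set cs. label c) \<times> {1..m}) (\<lambda>(i, r). \<Prod>c\<leftarrow>cs. tens D R W c r i)
      \<le> sqrt (\<Prod>c\<leftarrow>cs. \<Sum>r\<in>{1..m}. ?a c r)"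
    unfolding fnorm_def by (rule real_sqrt_le_mono)
  also have "\<dots> = (\<Prod>c\<leftarrow>cs. stack_norm D R W c m)"
    by (simp add: sqrt_prod_list sum_nonneg stack_norm_eq_sqrt_sum)
  finally show ?thesis .
qed

lemma fnorm_tens_MNode_le:
  assumes "distinct (concat (map leaves cs))" and "cs \<noteq> []"
  shows "fnorm (idx D (label (MNode cs))) (tens D R W (MNode cs) r)
         \<le> fnorm {1..R (label (MNode cs))} (\<lambda>r'. W (label (MNode cs)) r' r)
           * (\<Prod>c\<leftarrow>cs. stack_norm D R W c (R (label (MNode cs))))"
proof -
  let ?L = "label (MNode cs)"
  have "tens D R W (MNode cs) r = (\<lambda>i. \<Sum>r'\<in>{1..R ?L}. W ?L r' r * (\<Prod>c\<leftarrow>cs. tens D R W c r' i))"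
    by (rule ext) (simp only: tens.simps)
  then have "fnorm (idx D ?L) (tens D R W (MNode cs) r)
      \<le> fnorm {1..R ?L} (\<lambda>r'. W ?L r' r)
        * fnorm (idx D ?L \<times> {1..R ?L}) (\<lambda>(i, r'). \<Prod>c\<leftarrow>cs. tens D R W c r' i)"
    by (simp only: fnorm_sum_mult_le)
  also have "\<dots> \<le> fnorm {1..R ?L} (\<lambda>r'. W ?L r' r) * (\<Prod>c\<leftarrow>cs. stack_norm D R W c (R ?L))"
    using fnorm_stacked_prod_list_tens_le[OF assms] fnorm_nonneg
    by (intro mult_left_mono) (simp_all only: label.simps)
  finally show ?thesis .
qed

theorem lemma7:
  fixes N :: nat and D :: "nat \<Rightarrow> nat" and R :: "nat set \<Rightarrow> nat"
    and W :: "nat set \<Rightarrow> nat \<Rightarrow> nat \<Rightarrow> real"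
    and T :: mtree and cs :: "mtree list" and pr r :: nat
  assumes "N \<ge> 1"
    and "mode_tree N T"
    and "\<forall>n\<in>{1..N}. D n \<ge> 1"
    and "\<forall>t\<in>set (subtrees T). (\<exists>ts. t = MNode ts) \<longrightarrow> R (label t) \<ge> 1"
    and "(MNode cs, pr) \<in> nodes_pr R T 1"
    and "r \<in> {1..pr}"
  shows "fnorm (idx D (label (MNode cs))) (tens D R W (MNode cs) r)
         \<le> fnorm {1..R (label (MNode cs))} (\<lambda>r'. W (label (MNode cs)) r' r)
           * prod_list (map (\<lambda>c. stack_norm D R W c (R (label (MNode cs)))) cs)"
proof -
  \<comment> \<open>Only the shape of the tree below the node matters: the bound holds for every \<open>r\<close>,
    without positivity of \<open>D\<close> and \<open>R\<close>.\<close>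
  have "MNode cs \<in> set (subtrees T)"
    using assms(5) by (rule subtree_of_nodes_pr)
  then have "distinct (concat (map leaves cs))" and "cs \<noteq> []"
    using assms(2) distinct_leaves_subtree children_nonempty_subtree
    by (force simp: mode_tree_def)+
  then show ?thesis
    by (rule fnorm_tens_MNode_le)
qed

end
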